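(* Let $\beta=(\pi_\ell)_{\ell=1}^L$ be a chainable architecture with $L\ge 2$. Then $$\mathcal{B}^\beta=\bigcap_{\ell=1}^{L-1}\mathcal{B}^{\beta_\ell}=\Sigma^{\pi_1*\cdots*\pi_L}\cap\bigcap_{\ell=1}^{L-1}\mathcal{M}^{\beta_\ell}.$$
   Context: A pattern is a tuple $\pi=(a,b,c,d)$ of positive integers; $\mathbf{S}_\pi:=\mathbf{I}_a\otimes\mathbf{1}_{b\times c}\otimes\mathbf{I}_d\in\{0,1\}^{abd\times acd}$. A $\pi$-factor is a complex $abd\times acd$ matrix with support contained in that of $\mathbf{S}_\pi$; $\Sigma^\pi$ is the set of $\pi$-factors. Patterns $\pi_1=(a_1,b_1,c_1,d_1),\pi_2=(a_2,b_2,c_2,d_2)$ are chainable if $a_1c_1/a_2=b_2d_2/d_1=:r(\pi_1,\pi_2)$ is an integer, $a_1\mid a_2$, $d_2\mid d_1$; then $\pi_1*\pi_2:=(a_1,b_1d_1/d_2,a_2c_2/a_1,d_2)$. An architecture $\beta=(\pi_\ell)_{\ell=1}^L$ is a sequence of patterns with $a_\ell c_\ell d_\ell=a_{\ell+1}b_{\ell+1}d_{\ell+1}$; it is chainable if all consecutive pairs are chainable. For chainable $\beta$, $\pi_p*\cdots*\pi_q$ denotes the iterated product (well defined). $\mathcal{B}^\beta:=\{\mathbf{X}_1\cdots\mathbf{X}_L:\mathbf{X}_\ell\in\Sigma^{\pi_\ell}\}$. For $\ell\in\{1,\dots,L-1\}$, $\beta_\ell:=(\pi_1*\cdots*\pi_\ell,\;\pi_{\ell+1}*\cdots*\pi_L)$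 (a two-pattern architecture). For binary $\mathbf{L}\in\{0,1\}^{m\times r},\mathbf{R}\in\{0,1\}^{r\times n}$ let $\mathbf{U}_i:=\mathbf{L}[:,i]\mathbf{R}[i,:]$, let $\mathcal{P}(\mathbf{L},\mathbf{R})$ be the partition of $\{1,\dots,r\}$ into classes of $i\sim j\iff\mathbf{U}_i=\mathbf{U}_j$, and for a class $P$ let $R_P\times C_P$ be the support of $\mathbf{U}_i$, $i\in P$. For a chainable pair $\alpha=(\pi,\pi')$, $\mathcal{M}^\alpha$ is the set of complex matrices $\mathbf{A}$ of the size of matrices in $\mathcal{B}^\alpha$ such that $\operatorname{rank}(\mathbf{A}[R_P,C_P])\le r(\pi,\pi')$ for every $P\in\mathcal{P}(\mathbf{S}_\pi,\mathbf{S}_{\pi'})$. *)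

theory Defs
  imports Complex_Main "Jordan_Normal_Form.DL_Rank" "Jordan_Normal_Form.DL_Submatrix"
begin

text \<open>Patterns are tuples (a,b,c,d). All matrix indices are 0-based.\<close>

type_synonym pattern = "nat \<times> nat \<times> nat \<times> nat"

definition pattern_ok :: "pattern \<Rightarrow> bool" where
  "pattern_ok \<pi> = (case \<pi> of (a,b,c,d) \<Rightarrow> 0 < a \<and> 0 < b \<and> 0 < c \<and> 0 < d)"

definition pat_rows :: "pattern \<Rightarrow> nat" where
  "pat_rows \<pi> = (case \<pi> of (a,b,c,d) \<Rightarrow> a * b * d)"

definition pat_cols :: "pattern \<Rightarrow> nat" where
  "pat_cols \<pi> = (case \<pi> of (a,b,c,d) \<Rightarrow> a * c * d)"

text \<open>S_pi = I_a (x) 1_{b x c} (x) I_d, written entrywise: with row index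
  i = i1*(b*d) + i2*d + i3 and column index j = j1*(c*d) + j2*d + j3,
  the Kronecker product has entry 1 iff i1 = j1 and i3 = j3.\<close>
definition supp_mat :: "pattern \<Rightarrow> nat mat" where
  "supp_mat \<pi> = (case \<pi> of (a,b,c,d) \<Rightarrow>
     mat (a*b*d) (a*c*d) (\<lambda>(i,j). if i div (b*d) = j div (c*d) \<and> i mod d = j mod d then 1 else 0))"

definition factors :: "pattern \<Rightarrow> complex mat set" where
  "factors \<pi> = {X. X \<in> carrier_mat (pat_rows \<pi>) (pat_cols \<pi>) \<and>
      (\<forall>i<pat_rows \<pi>. \<forall>j<pat_cols \<pi>. supp_mat \<pi> $$ (i,j) = 0 \<longrightarrow> X $$ (i,j) = 0)}"

definition chainable :: "pattern \<Rightarrow> pattern \<Rightarrow> bool" where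
  "chainable \<pi>1 \<pi>2 = (case \<pi>1 of (a1,b1,c1,d1) \<Rightarrow> case \<pi>2 of (a2,b2,c2,d2) \<Rightarrow>
      a2 dvd a1 * c1 \<and> d1 dvd b2 * d2 \<and> a1 * c1 div a2 = b2 * d2 div d1 \<and>
      a1 dvd a2 \<and> d2 dvd d1)"

definition chain_r :: "pattern \<Rightarrow> pattern \<Rightarrow> nat" where
  "chain_r \<pi>1 \<pi>2 = (case \<pi>1 of (a1,b1,c1,d1) \<Rightarrow> case \<pi>2 of (a2,b2,c2,d2) \<Rightarrow> a1 * c1 div a2)"

definition pstar :: "pattern \<Rightarrow> pattern \<Rightarrow> pattern" where
  "pstar \<pi>1 \<pi>2 = (case \<pi>1 of (a1,b1,c1,d1) \<Rightarrow> case \<pi>2 of (a2,b2,c2,d2) \<Rightarrow>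
      (a1, b1 * d1 div d2, a2 * c2 div a1, d2))"

definition pstar_list :: "pattern list \<Rightarrow> pattern" where
  "pstar_list ps = foldl pstar (hd ps) (tl ps)"

definition architecture :: "pattern list \<Rightarrow> bool" where
  "architecture \<beta> = (\<beta> \<noteq> [] \<and> (\<forall>\<pi>\<in>set \<beta>. pattern_ok \<pi>) \<and>
      (\<forall>l. Suc l < length \<beta> \<longrightarrow> pat_cols (\<beta> ! l) = pat_rows (\<beta> ! Suc l)))"

definition chainable_arch :: "pattern list \<Rightarrow> bool" where
  "chainable_arch \<beta> = (architecture \<beta> \<and>
      (\<forall>l. Suc l < length \<beta> \<longrightarrow> chainable (\<beta> ! l) (\<beta> ! Suc l)))"

fun mprod :: "'a::semiring_1 mat list \<Rightarrow> 'a mat" where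
  "mprod [] = 1\<^sub>m 0"
| "mprod [X] = X"
| "mprod (X # Y # Xs) = X * mprod (Y # Xs)"

definition Bset :: "pattern list \<Rightarrow> complex mat set" where
  "Bset \<beta> = {mprod Xs | Xs. length Xs = length \<beta> \<and> (\<forall>l<length \<beta>. Xs ! l \<in> factors (\<beta> ! l))}"

definition beta_split :: "pattern list \<Rightarrow> nat \<Rightarrow> pattern \<times> pattern" where
  "beta_split \<beta> l = (pstar_list (take l \<beta>), pstar_list (drop l \<beta>))"

definition Umat :: "nat mat \<Rightarrow> nat mat \<Rightarrow> nat \<Rightarrow> nat mat" where
  "Umat L R i = mat (dim_row L) (dim_col R) (\<lambda>(k,j). L $$ (k,i) * R $$ (i,j))"

definition Ppart :: "nat mat \<Rightarrow> nat mat \<Rightarrow> nat set set" where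
  "Ppart L R = {{j. j < dim_col L \<and> Umat L R j = Umat L R i} | i. i < dim_col L}"

definition RP :: "nat mat \<Rightarrow> nat mat \<Rightarrow> nat set \<Rightarrow> nat set" where
  "RP L R P = {k. k < dim_row L \<and> (\<exists>i\<in>P. \<exists>j<dim_col R. Umat L R i $$ (k,j) \<noteq> 0)}"

definition CP :: "nat mat \<Rightarrow> nat mat \<Rightarrow> nat set \<Rightarrow> nat set" where
  "CP L R P = {j. j < dim_col R \<and> (\<exists>i\<in>P. \<exists>k<dim_row L. Umat L R i $$ (k,j) \<noteq> 0)}"

definition Mset :: "pattern \<times> pattern \<Rightarrow> complex mat set" where
  "Mset \<alpha> = (case \<alpha> of (\<pi>, \<pi>') \<Rightarrow>
     {A. A \<in> carrier_mat (pat_rows \<pi>) (pat_cols \<pi>') \<and>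
       (\<forall>P\<in>Ppart (supp_mat \<pi>) (supp_mat \<pi>').
          let Rs = RP (supp_mat \<pi>) (supp_mat \<pi>') P; Cs = CP (supp_mat \<pi>) (supp_mat \<pi>') P;
              Asub = submatrix A Rs Cs
          in vec_space.rank (dim_row Asub) Asub \<le> chain_r \<pi> \<pi>')})"

end

(* For chainable patterns p and q, an inner index k of S_p S_q connects the rows in the support
   of column k of S_p with the columns in the support of row k of S_q, and exactly r = r(p,q)
   inner indices share this pair of supports.  Hence on every block R_P x C_P a product X Y is a
   sum of r rank-one matrices, so B^(p,q) is contained in Sigma^(p*q) /\ M^(p,q).  Conversely, a
   factorization of each block through at most r of its own columns can be spread over the r
   inner indices of the class.

   For longer architectures, regrouping the product shows that B^beta lies in every B^(beta_l).
   For the reverse inclusion split off the last factor, A = Z Y, with every column of Z equal on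
   its support to a column of A.  The blocks of Z for the splits of the shorter architecture are
   then products of blocks of A with selection matrices, so Z inherits the rank constraints and
   induction on the length applies. *)

theory Submission
  imports Defs
begin

section \<open>Rank bounds through factorizations\<close>

abbreviation submatrix_rank :: "'a::field mat \<Rightarrow> nat set \<Rightarrow> nat set \<Rightarrow> nat" where
  "submatrix_rank A I J \<equiv> vec_space.rank (dim_row (submatrix A I J)) (submatrix A I J)"

lemma rank_mat_sum_prod_le:
  fixes F G :: "nat \<Rightarrow> nat \<Rightarrow> 'a::field"
  shows "vec_space.rank n (mat n m (\<lambda>(i,j). \<Sum>x<r. F i x * G x j)) \<le> r"
proof (induction r)
  case 0
  have "mat n m (\<lambda>(i,j). \<Sum>x<0. F i x * G x j) = 0\<^sub>m n m"
    by (rule eq_matI) auto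
  then show ?case
    by (simp only: vec_space.rank_0I le_refl)
next
  case (Suc r)
  have split: "mat n m (\<lambda>(i,j). \<Sum>x<Suc r. F i x * G x j) =
      mat n m (\<lambda>(i,j). \<Sum>x<r. F i x * G x j) + mat n m (\<lambda>(i,j). F i r * G r j)"
    by (rule eq_matI) auto
  have "vec_space.rank n (mat n m (\<lambda>(i,j). F i r * G r j)) \<le> 1"
    by (rule vec_space.rank_le_1_product_entries[of _ n m "\<lambda>i. F i r" "\<lambda>j. G r j"]) auto
  moreover have "vec_space.rank n (mat n m (\<lambda>(i,j). \<Sum>x<Suc r. F i x * G x j)) \<le>
      vec_space.rank n (mat n m (\<lambda>(i,j). \<Sum>x<r. F i x * G x j)) +
      vec_space.rank n (mat n m (\<lambda>(i,j). F i r * G r j))"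
    unfolding split by (rule vec_space.rank_subadditive) auto
  ultimately show ?case
    using Suc.IH by linarith
qed

lemma pick_bounded:
  assumes "a < card {i. i < n \<and> i \<in> I}"
  shows "pick I a \<in> I" "pick I a < n"
proof -
  have "a < card I \<or> infinite I"
  proof (cases "finite I")
    case True
    then have "card {i. i < n \<and> i \<in> I} \<le> card I"
      by (intro card_mono) auto
    with assms show ?thesis by simp
  qed simp
  then show "pick I a \<in> I"
    by (rule pick_in_set)
  show "pick I a < n"
    using pick_le[OF assms] .
qed

lemma card_less_bounded:
  fixes i n :: nat
  assumes "i < n" "i \<in> I"
  shows "card {a \<in> I. a < i} < card {a. a < n \<and> a \<in> I}"
proof (rule psubset_card_mono)
  show "finite {a. a < n \<and> a \<in> I}"
    by (rule finite_subset[of _ "{..<n}"]) auto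
  show "{a \<in> I. a < i} \<subset> {a. a < n \<and> a \<in> I}"
    using assms by auto
qed

lemma submatrix_rank_le:
  fixes A :: "'a::field mat"
  assumes "\<And>i j. i \<in> I \<Longrightarrow> j \<in> J \<Longrightarrow> i < dim_row A \<Longrightarrow> j < dim_col A \<Longrightarrow>
      A $$ (i,j) = (\<Sum>x<r. F i x * G x j)"
  shows "submatrix_rank A I J \<le> r"
proof -
  let ?p = "card {i. i < dim_row A \<and> i \<in> I}" and ?q = "card {j. j < dim_col A \<and> j \<in> J}"
  have sub: "submatrix A I J = mat ?p ?q (\<lambda>(a,b). \<Sum>x<r. F (pick I a) x * G x (pick J b))"
    by (rule eq_matI) (auto simp: dim_submatrix submatrix_index pick_bounded assms)
  show ?thesis
    unfolding sub dim_row_mat by (rule rank_mat_sum_prod_le)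
qed

lemma (in vec_space) maximal_indpt_cols_span:
  assumes M: "M \<in> carrier_mat n m" and U: "maximal U (\<lambda>T. T \<subseteq> set (cols M) \<and> lin_indpt T)"
    and j: "j < m"
  shows "col M j \<in> span U"
proof (rule ccontr)
  assume not_span: "col M j \<notin> span U"
  have U_cols: "U \<subseteq> set (cols M)" and U_indpt: "lin_indpt U"
    using U unfolding maximal_def by auto
  have cols_carrier: "set (cols M) \<subseteq> carrier_vec n"
    using M cols_dim by blast
  then have U_carrier: "U \<subseteq> carrier_vec n"
    using U_cols by blast
  have col: "col M j \<in> set (cols M)"
    using j M by (simp add: cols_def)
  then have "col M j \<notin> U"
    using not_span in_own_span[OF U_carrier] by blast
  then have "lin_indpt (U \<union> {col M j})"
    using lin_dep_iff_in_span[OF U_carrier U_indpt] col cols_carrier not_span by blast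
  then have "U \<union> {col M j} = U"
    using U col U_cols unfolding maximal_def by blast
  with \<open>col M j \<notin> U\<close> show False by blast
qed

lemma (in vec_space) lincomb_cols_index:
  assumes M: "M \<in> carrier_mat n m" and J0: "J0 \<subseteq> {..<m}" "inj_on (col M) J0" and i: "i < n"
  shows "lincomb a (col M ` J0) $ i = (\<Sum>j\<in>J0. a (col M j) * M $$ (i,j))"
proof -
  have "col M ` J0 \<subseteq> carrier_vec n"
    using M J0(1) by auto
  then have "lincomb a (col M ` J0) $ i = (\<Sum>u\<in>col M ` J0. a u * u $ i)"
    by (rule lincomb_index[OF i])
  also have "\<dots> = (\<Sum>j\<in>J0. a (col M j) * M $$ (i,j))"
  proof (rule sum.reindex_cong[OF J0(2) refl, where g = "\<lambda>u. a u * u $ i"])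
    fix j assume "j \<in> J0"
    then show "a (col M j) * col M j $ i = a (col M j) * M $$ (i,j)"
      using J0(1) i M by auto
  qed
  finally show ?thesis .
qed

lemma (in vec_space) column_basis:
  assumes M: "M \<in> carrier_mat n m"
  obtains J0 where "J0 \<subseteq> {..<m}" "card J0 = rank M"
    "\<And>j. j < m \<Longrightarrow> \<exists>c. \<forall>i<n. M $$ (i,j) = (\<Sum>j'\<in>J0. c j' * M $$ (i,j'))"
proof -
  let ?P = "\<lambda>T. T \<subseteq> set (cols M) \<and> lin_indpt T"
  obtain U where U: "maximal U ?P"
    using maximal_exists[of ?P "card (set (cols M))" "{}"]
    by (meson List.finite_set card_mono empty_iff empty_subsetI finite_lin_indpt2 rev_finite_subset)
  have U_cols: "U \<subseteq> set (cols M)"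
    using U unfolding maximal_def by auto
  have U_carrier: "U \<subseteq> carrier_vec n"
    using U_cols M cols_dim by blast
  have "U \<subseteq> col M ` {..<m}"
    using U_cols M by (auto simp: cols_def)
  then obtain J0 where J0: "J0 \<subseteq> {..<m}" "inj_on (col M) J0" "U = col M ` J0"
    by (auto simp: subset_image_inj)
  show thesis
  proof
    show "J0 \<subseteq> {..<m}"
      using J0(1) .
    have "rank M = card U"
      using rank_card_indpt[OF M U] .
    also have "\<dots> = card J0"
      unfolding J0(3) by (rule card_image[OF J0(2)])
    finally show "card J0 = rank M" by simp
    fix j assume j: "j < m"
    obtain a where a: "lincomb a U = col M j"
      using finite_in_span[OF finite_subset[OF U_cols] U_carrier maximal_indpt_cols_span[OF M U j]]
      by blast
    have "M $$ (i,j) = (\<Sum>j'\<in>J0. a (col M j') * M $$ (i,j'))" if i: "i < n" for i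
    proof -
      have "M $$ (i,j) = lincomb a (col M ` J0) $ i"
        using a J0(3) i j M by simp
      also have "\<dots> = (\<Sum>j'\<in>J0. a (col M j') * M $$ (i,j'))"
        by (rule lincomb_cols_index[OF M J0(1,2) i])
      finally show ?thesis .
    qed
    then show "\<exists>c. \<forall>i<n. M $$ (i,j) = (\<Sum>j'\<in>J0. c j' * M $$ (i,j'))"
      by (intro exI[where x = "\<lambda>j'. a (col M j')"]) blast
  qed
qed

lemma (in vec_space) rank_le_column_factorization:
  assumes M: "M \<in> carrier_mat n m" and rk: "rank M \<le> r" and m: "0 < m"
  obtains \<sigma> g where "\<And>x. \<sigma> x < m"
    "\<And>i j. i < n \<Longrightarrow> j < m \<Longrightarrow> M $$ (i,j) = (\<Sum>x<r. M $$ (i, \<sigma> x) * g x j)"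
proof -
  obtain J0 where J0: "J0 \<subseteq> {..<m}" "card J0 = rank M"
    and span: "\<And>j. j < m \<Longrightarrow> \<exists>c. \<forall>i<n. M $$ (i,j) = (\<Sum>j'\<in>J0. c j' * M $$ (i,j'))"
    using column_basis[OF M] by blast
  obtain c where c: "\<And>i j. i < n \<Longrightarrow> j < m \<Longrightarrow> M $$ (i,j) = (\<Sum>j'\<in>J0. c j j' * M $$ (i,j'))"
    using choice[of "\<lambda>j c. j < m \<longrightarrow> (\<forall>i<n. M $$ (i,j) = (\<Sum>j'\<in>J0. c j' * M $$ (i,j')))"] span
    by blast
  obtain js where js: "set js = J0" "distinct js"
    using finite_distinct_list[OF finite_subset[OF J0(1)]] by blast
  have len: "length js \<le> r"
    using distinct_card[OF js(2)] js(1) J0(2) rk by simp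
  define \<sigma> where "\<sigma> x = (if x < length js then js ! x else 0)" for x
  define g where "g x j = (if x < length js then c j (js ! x) else 0)" for x j
  show thesis
  proof
    show "\<sigma> x < m" for x
      using nth_mem[of x js] js(1) J0(1) m by (auto simp: \<sigma>_def)
    fix i j assume i: "i < n" and j: "j < m"
    have "M $$ (i,j) = (\<Sum>j'\<in>J0. c j j' * M $$ (i,j'))"
      using c[OF i j] .
    also have "\<dots> = (\<Sum>x<length js. c j (js ! x) * M $$ (i, js ! x))"
      by (rule sum.reindex_bij_betw[OF bij_betw_nth[OF js(2) refl js(1)[symmetric]], symmetric])
    also have "\<dots> = (\<Sum>x<length js. M $$ (i, \<sigma> x) * g x j)"
      by (rule sum.cong) (simp_all add: \<sigma>_def g_def mult.commute)
    also have "\<dots> = (\<Sum>x<r. M $$ (i, \<sigma> x) * g x j)"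
    proof (rule sum.mono_neutral_left)
      show "{..<length js} \<subseteq> {..<r}"
        using len by auto
    qed (simp_all add: g_def)
    finally show "M $$ (i,j) = (\<Sum>x<r. M $$ (i, \<sigma> x) * g x j)" .
  qed
qed

lemma submatrix_rank_le_column_factorization:
  fixes A :: "'a::field mat"
  assumes rk: "submatrix_rank A I J \<le> r" and j0: "j0 \<in> J" "j0 < dim_col A"
  obtains \<sigma> g where "\<And>x. \<sigma> x \<in> J \<and> \<sigma> x < dim_col A"
    "\<And>i j. i \<in> I \<Longrightarrow> j \<in> J \<Longrightarrow> i < dim_row A \<Longrightarrow> j < dim_col A \<Longrightarrow>
      A $$ (i,j) = (\<Sum>x<r. A $$ (i, \<sigma> x) * g x j)"
proof -
  let ?p = "card {i. i < dim_row A \<and> i \<in> I}" and ?q = "card {j. j < dim_col A \<and> j \<in> J}"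
  have M: "submatrix A I J \<in> carrier_mat ?p ?q"
    by (rule carrier_matI) (simp_all only: dim_submatrix)
  have rk': "vec_space.rank ?p (submatrix A I J) \<le> r"
    using rk by (simp only: dim_submatrix(1))
  have q: "0 < ?q"
    using card_less_bounded[OF j0(2,1)] by linarith
  obtain \<sigma> g where \<sigma>: "\<And>x. \<sigma> x < ?q" and fac: "\<And>a b. a < ?p \<Longrightarrow> b < ?q \<Longrightarrow>
      submatrix A I J $$ (a,b) = (\<Sum>x<r. submatrix A I J $$ (a, \<sigma> x) * g x b)"
    using vec_space.rank_le_column_factorization[OF M rk' q] by blast
  show thesis
  proof
    show "pick J (\<sigma> x) \<in> J \<and> pick J (\<sigma> x) < dim_col A" for x
      using pick_bounded[OF \<sigma>] by blast
    fix i j assume ij: "i \<in> I" "j \<in> J" "i < dim_row A" "j < dim_col A"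
    let ?a = "card {a \<in> I. a < i}" and ?b = "card {b \<in> J. b < j}"
    have a: "?a < ?p" and b: "?b < ?q"
      using card_less_bounded ij by blast+
    have "A $$ (i,j) = submatrix A I J $$ (?a, ?b)"
      by (rule submatrix_index_card[OF ij(3,4,1,2), symmetric])
    also have "\<dots> = (\<Sum>x<r. A $$ (i, pick J (\<sigma> x)) * g x ?b)"
      using fac[OF a b] submatrix_index[OF a \<sigma>] pick_card_in_set[OF ij(1)] by simp
    finally show "A $$ (i,j) = (\<Sum>x<r. A $$ (i, pick J (\<sigma> x)) * g x ?b)" .
  qed
qed

section \<open>Supports of patterns and the rank constraints\<close>

lemma mult_add_less_mult:
  fixes x y a m :: nat
  assumes "x < a" "y < m"
  shows "x * m + y < a * m"
proof -
  have "x * m + y < Suc x * m"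
    using assms(2) by simp
  also have "\<dots> \<le> a * m"
    using assms(1) by (intro mult_le_mono1) simp
  finally show ?thesis .
qed

lemma mult_add_div_cancel:
  fixes x y m :: nat
  assumes "y < m"
  shows "(x * m + y) div m = x"
  using assms by simp

definition supp :: "pattern \<Rightarrow> nat \<Rightarrow> nat \<Rightarrow> bool" where
  "supp \<pi> i j \<longleftrightarrow> i < pat_rows \<pi> \<and> j < pat_cols \<pi> \<and> supp_mat \<pi> $$ (i,j) \<noteq> 0"

lemma supp_iff:
  "supp (a,b,c,d) i j \<longleftrightarrow> i < a*b*d \<and> j < a*c*d \<and> i div (b*d) = j div (c*d) \<and> i mod d = j mod d"
  by (auto simp: supp_def supp_mat_def pat_rows_def pat_cols_def split: if_splits)

lemma supp_mat_dims [simp]: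
  "dim_row (supp_mat \<pi>) = pat_rows \<pi>" "dim_col (supp_mat \<pi>) = pat_cols \<pi>"
  by (cases \<pi>; simp add: supp_mat_def pat_rows_def pat_cols_def)+

lemma pattern_ok_iff: "pattern_ok (a,b,c,d) \<longleftrightarrow> 0 < a \<and> 0 < b \<and> 0 < c \<and> 0 < d"
  by (simp add: pattern_ok_def)

lemma factors_iff:
  "X \<in> factors \<pi> \<longleftrightarrow> X \<in> carrier_mat (pat_rows \<pi>) (pat_cols \<pi>) \<and>
     (\<forall>i<pat_rows \<pi>. \<forall>j<pat_cols \<pi>. \<not> supp \<pi> i j \<longrightarrow> X $$ (i,j) = 0)"
  by (auto simp: factors_def supp_def)

lemma supp_in_row:
  assumes "pattern_ok \<pi>" "k < pat_rows \<pi>"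
  obtains j where "supp \<pi> k j"
proof -
  obtain a b c d where \<pi>: "\<pi> = (a,b,c,d)" and pos: "0 < b" "0 < c" "0 < d"
    using assms(1) by (cases \<pi>) (auto simp: pattern_ok_iff)
  have k: "k < a*(b*d)"
    using assms(2) by (simp add: \<pi> pat_rows_def mult.assoc)
  have m: "k mod d < c*d"
    using pos by (simp add: less_le_trans[OF _ mult_le_mono1[of 1 c d]])
  define j where "j = k div (b*d) * (c*d) + k mod d"
  have "j div (c*d) = k div (b*d)"
    unfolding j_def using m by (rule mult_add_div_cancel)
  moreover have "j mod d = k mod d"
    by (simp add: j_def mult.assoc[symmetric])
  moreover have "j < a*c*d"
    using mult_add_less_mult[OF less_mult_imp_div_less[OF k] m] by (simp add: j_def mult.assoc)
  ultimately have "supp \<pi> k j"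
    using k by (simp add: \<pi> supp_iff mult.assoc)
  then show thesis ..
qed

lemma supp_in_col:
  assumes "pattern_ok \<pi>" "k < pat_cols \<pi>"
  obtains i where "supp \<pi> i k"
proof -
  obtain a b c d where \<pi>: "\<pi> = (a,b,c,d)"
    by (cases \<pi>)
  have "pattern_ok (a,c,b,d)" "k < pat_rows (a,c,b,d)"
    using assms by (auto simp: \<pi> pattern_ok_def pat_rows_def pat_cols_def)
  then obtain i where "supp (a,c,b,d) k i"
    by (rule supp_in_row)
  then have "supp \<pi> i k"
    unfolding \<pi> supp_iff by (auto simp: mult.commute mult.left_commute)
  then show thesis ..
qed

lemma Umat_index:
  "i < dim_row L \<Longrightarrow> j < dim_col R \<Longrightarrow> Umat L R k $$ (i,j) = L $$ (i,k) * R $$ (k,j)"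
  by (simp add: Umat_def)

lemma Ppart_eq_image:
  "Ppart L R = (\<lambda>k. {k'. k' < dim_col L \<and> Umat L R k' = Umat L R k}) ` {..<dim_col L}"
  unfolding Ppart_def by auto

lemma RP_Umat_class:
  assumes "k < dim_col L" "j0 < dim_col R" "R $$ (k,j0) \<noteq> 0"
  shows "RP L R {k'. k' < dim_col L \<and> Umat L R k' = Umat L R k} = {i. i < dim_row L \<and> L $$ (i,k) \<noteq> 0}"
  using assms by (force simp: RP_def Umat_index)

lemma CP_Umat_class:
  assumes "k < dim_col L" "i0 < dim_row L" "L $$ (i0,k) \<noteq> 0"
  shows "CP L R {k'. k' < dim_col L \<and> Umat L R k' = Umat L R k} = {j. j < dim_col R \<and> R $$ (k,j) \<noteq> 0}"
  using assms by (force simp: CP_def Umat_index)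

lemma Mset_iff:
  assumes "pattern_ok p" "pattern_ok q" "pat_cols p = pat_rows q"
  shows "A \<in> Mset (p, q) \<longleftrightarrow> A \<in> carrier_mat (pat_rows p) (pat_cols q) \<and>
    (\<forall>k<pat_cols p. submatrix_rank A {i. supp p i k} {j. supp q k j} \<le> chain_r p q)"
proof -
  let ?U = "Umat (supp_mat p) (supp_mat q)"
  let ?cls = "\<lambda>k. {k'. k' < pat_cols p \<and> ?U k' = ?U k}"
  have blocks: "RP (supp_mat p) (supp_mat q) (?cls k) = {i. supp p i k}"
    "CP (supp_mat p) (supp_mat q) (?cls k) = {j. supp q k j}" if k: "k < pat_cols p" for k
  proof -
    obtain j0 where "supp q k j0"
      using supp_in_row[OF assms(2)] k assms(3) by metis
    then show "RP (supp_mat p) (supp_mat q) (?cls k) = {i. supp p i k}"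
      using RP_Umat_class[of k "supp_mat p" j0 "supp_mat q"] k by (auto simp: supp_def)
    obtain i0 where "supp p i0 k"
      using supp_in_col[OF assms(1)] k by metis
    then show "CP (supp_mat p) (supp_mat q) (?cls k) = {j. supp q k j}"
      using CP_Umat_class[of k "supp_mat p" i0 "supp_mat q"] k assms(3) by (auto simp: supp_def)
  qed
  show ?thesis
    unfolding Mset_def Ppart_eq_image using blocks by (auto simp: Let_def pat_rows_def pat_cols_def)
qed

lemma Mset_block_factorization:
  assumes ok: "pattern_ok p" "pattern_ok q" "pat_cols p = pat_rows q"
    and A: "A \<in> Mset (p, q)" and k: "k < pat_cols p"
  obtains \<sigma> g where "\<And>x. supp q k (\<sigma> x)"
    "\<And>i j. supp p i k \<Longrightarrow> supp q k j \<Longrightarrow> A $$ (i,j) = (\<Sum>x<chain_r p q. A $$ (i, \<sigma> x) * g x j)"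
proof -
  have AC: "A \<in> carrier_mat (pat_rows p) (pat_cols q)"
    and rk: "submatrix_rank A {i. supp p i k} {j. supp q k j} \<le> chain_r p q"
    using A k unfolding Mset_iff[OF ok] by blast+
  obtain j0 where "supp q k j0"
    using supp_in_row[OF ok(2)] k ok(3) by metis
  then have j0: "j0 \<in> {j. supp q k j}" "j0 < dim_col A"
    using AC by (simp_all add: supp_def)
  obtain \<sigma> g where \<sigma>: "\<And>x. \<sigma> x \<in> {j. supp q k j} \<and> \<sigma> x < dim_col A"
    and fac: "\<And>i j. i \<in> {i. supp p i k} \<Longrightarrow> j \<in> {j. supp q k j} \<Longrightarrow> i < dim_row A \<Longrightarrow>
      j < dim_col A \<Longrightarrow> A $$ (i,j) = (\<Sum>x<chain_r p q. A $$ (i, \<sigma> x) * g x j)"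
    using submatrix_rank_le_column_factorization[OF rk j0] by blast
  show thesis
  proof
    show "supp q k (\<sigma> x)" for x
      using \<sigma> by simp
    fix i j assume "supp p i k" "supp q k j"
    then show "A $$ (i,j) = (\<Sum>x<chain_r p q. A $$ (i, \<sigma> x) * g x j)"
      using fac AC by (simp add: supp_def)
  qed
qed

lemma mult_factors_index:
  assumes X: "X \<in> factors p" and Y: "Y \<in> factors q" and dims: "pat_cols p = pat_rows q"
    and i: "i < pat_rows p" and j: "j < pat_cols q"
  shows "(X * Y) $$ (i,j) = (\<Sum>k | supp p i k \<and> supp q k j. X $$ (i,k) * Y $$ (k,j))"
proof -
  have XC: "X \<in> carrier_mat (pat_rows p) (pat_cols p)" and YC: "Y \<in> carrier_mat (pat_rows q) (pat_cols q)"
    using X Y by (auto simp: factors_iff)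
  have "(X * Y) $$ (i,j) = (\<Sum>k<pat_cols p. X $$ (i,k) * Y $$ (k,j))"
    using XC YC i j dims by (simp add: index_mult_mat scalar_prod_def atLeast0LessThan)
  also have "\<dots> = (\<Sum>k | supp p i k \<and> supp q k j. X $$ (i,k) * Y $$ (k,j))"
  proof (rule sum.mono_neutral_right)
    show "{k. supp p i k \<and> supp q k j} \<subseteq> {..<pat_cols p}"
      by (auto simp: supp_def)
    show "\<forall>k\<in>{..<pat_cols p} - {k. supp p i k \<and> supp q k j}. X $$ (i,k) * Y $$ (k,j) = 0"
      using X Y i j dims by (auto simp: factors_iff)
  qed simp
  finally show ?thesis .
qed

section \<open>Chainable architectures and iterated products of patterns\<close>

lemma chainable_iff:
  "chainable (a1,b1,c1,d1) (a2,b2,c2,d2) \<longleftrightarrow> a2 dvd a1 * c1 \<and> d1 dvd b2 * d2 \<and>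
     a1 * c1 div a2 = b2 * d2 div d1 \<and> a1 dvd a2 \<and> d2 dvd d1"
  by (simp add: chainable_def)

lemma chainable_arch_pattern_ok: "chainable_arch \<beta> \<Longrightarrow> \<pi> \<in> set \<beta> \<Longrightarrow> pattern_ok \<pi>"
  by (simp add: chainable_arch_def architecture_def)

lemma chainable_arch_take: "chainable_arch \<beta> \<Longrightarrow> 0 < l \<Longrightarrow> chainable_arch (take l \<beta>)"
  unfolding chainable_arch_def architecture_def by (auto simp: nth_take dest: in_set_takeD)

lemma chainable_arch_drop: "chainable_arch \<beta> \<Longrightarrow> l < length \<beta> \<Longrightarrow> chainable_arch (drop l \<beta>)"
  unfolding chainable_arch_def architecture_def by (auto simp: nth_drop dest: in_set_dropD)

lemma chainable_arch_appendD:
  assumes "chainable_arch (xs @ ys)" "xs \<noteq> []" "ys \<noteq> []"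
  shows "chainable_arch xs" "chainable_arch ys"
    "chainable (last xs) (hd ys)" "pat_cols (last xs) = pat_rows (hd ys)"
proof -
  show "chainable_arch xs"
    using chainable_arch_take[OF assms(1), of "length xs"] assms(2) by simp
  show "chainable_arch ys"
    using chainable_arch_drop[OF assms(1), of "length xs"] assms(3) by simp
  let ?l = "length xs - 1"
  have "Suc ?l < length (xs @ ys)" "(xs @ ys) ! ?l = last xs" "(xs @ ys) ! Suc ?l = hd ys"
    using assms(2,3) by (auto simp: nth_append last_conv_nth hd_conv_nth)
  then show "chainable (last xs) (hd ys)" "pat_cols (last xs) = pat_rows (hd ys)"
    using assms(1) unfolding chainable_arch_def architecture_def by metis+
qed

lemma chainable_arch_pairD:
  assumes "chainable_arch [p, q]"
  shows "pattern_ok p" "pattern_ok q" "pat_cols p = pat_rows q"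
  using chainable_arch_pattern_ok[OF assms] chainable_arch_appendD(4)[of "[p]" "[q]"] assms by simp_all

lemma pstar_list_single [simp]: "pstar_list [p] = p"
  by (simp add: pstar_list_def)

lemma pstar_list_snoc: "xs \<noteq> [] \<Longrightarrow> pstar_list (xs @ [x]) = pstar (pstar_list xs) x"
  by (cases xs) (simp_all add: pstar_list_def)

lemma pstar_list_closed_form:
  assumes "chainable_arch \<beta>" "hd \<beta> = (a,b,c,d)" "last \<beta> = (a',b',c',d')"
  shows "pstar_list \<beta> = (a, b*d div d', a'*c' div a, d') \<and> a dvd a' \<and> d' dvd d"
  using assms
proof (induction \<beta> arbitrary: a' b' c' d' rule: rev_induct)
  case Nil
  then show ?case
    by (simp add: chainable_arch_def architecture_def)
next
  case (snoc x xs)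
  show ?case
  proof (cases "xs = []")
    case True
    then have "x = (a,b,c,d)" "x = (a',b',c',d')"
      using snoc.prems by simp_all
    moreover have "pattern_ok x"
      using chainable_arch_pattern_ok[OF snoc.prems(1)] by simp
    ultimately show ?thesis
      using True by (simp add: pattern_ok_iff)
  next
    case False
    obtain a'' b'' c'' d'' where last: "last xs = (a'',b'',c'',d'')"
      by (cases "last xs")
    have xs: "chainable_arch xs" and step: "chainable (last xs) x"
      using chainable_arch_appendD[OF snoc.prems(1) False] by simp_all
    have IH: "pstar_list xs = (a, b*d div d'', a''*c'' div a, d'')" "a dvd a''" "d'' dvd d"
      using snoc.IH[OF xs _ last] snoc.prems(2) False by simp_all
    have "a'' dvd a'" "d' dvd d''"
      using step snoc.prems(3) by (simp_all add: last chainable_iff)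
    then have "a dvd a'" "d' dvd d" "b*d div d'' * d'' = b*d"
      using IH(2,3) by (auto intro: dvd_trans)
    then show ?thesis
      using snoc.prems(3) by (simp add: pstar_list_snoc[OF False] IH(1) pstar_def)
  qed
qed

lemma pstar_list_append:
  assumes "chainable_arch (xs @ ys)" "xs \<noteq> []" "ys \<noteq> []"
  shows "chainable_arch [pstar_list xs, pstar_list ys]"
    "pstar (pstar_list xs) (pstar_list ys) = pstar_list (xs @ ys)"
proof -
  obtain a0 b0 c0 d0 a1 b1 c1 d1 a2 b2 c2 d2 a3 b3 c3 d3 where
    ends: "hd xs = (a0,b0,c0,d0)" "last xs = (a1,b1,c1,d1)" "hd ys = (a2,b2,c2,d2)" "last ys = (a3,b3,c3,d3)"
    by (metis prod_cases4)
  have xs: "chainable_arch xs" and ys: "chainable_arch ys"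
    and junction: "chainable (a1,b1,c1,d1) (a2,b2,c2,d2)" "a1*c1*d1 = a2*b2*d2"
    using chainable_arch_appendD[OF assms] ends by (simp_all add: pat_rows_def pat_cols_def)
  have "pattern_ok (hd xs)" "pattern_ok (last xs)" "pattern_ok (hd ys)" "pattern_ok (last ys)"
    using chainable_arch_pattern_ok[OF assms(1)] assms(2,3) by simp_all
  then have pos: "0 < a0" "0 < b0" "0 < d0" "0 < a1" "0 < c1" "0 < d1"
      "0 < a2" "0 < b2" "0 < d2" "0 < a3" "0 < c3" "0 < d3"
    by (simp_all add: ends pattern_ok_iff)
  have P: "pstar_list xs = (a0, b0*d0 div d1, a1*c1 div a0, d1)" "a0 dvd a1" "d1 dvd d0"
    using pstar_list_closed_form[OF xs ends(1,2)] by simp_all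
  have Q: "pstar_list ys = (a2, b2*d2 div d3, a3*c3 div a2, d3)" "a2 dvd a3" "d3 dvd d2"
    using pstar_list_closed_form[OF ys ends(3,4)] by simp_all
  have PQ: "pstar_list (xs @ ys) = (a0, b0*d0 div d3, a3*c3 div a0, d3)"
    using pstar_list_closed_form[OF assms(1)] assms(2,3) ends by simp
  have step: "a2 dvd a1*c1" "d1 dvd b2*d2" "a1*c1 div a2 = b2*d2 div d1" "a1 dvd a2" "d2 dvd d1"
    using junction(1) by (simp_all add: chainable_iff)
  have dvd: "a0 dvd a2" "d3 dvd d1" "a0 dvd a3" "d3 dvd d0"
    using P(2,3) Q(2,3) step(4,5) by (meson dvd_trans)+
  have cancel: "b0*d0 div d1 * d1 = b0*d0" "a0 * (a1*c1 div a0) = a1*c1"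
      "b2*d2 div d3 * d3 = b2*d2" "a2 * (a3*c3 div a2) = a3*c3"
    using P(2,3) Q(2,3) by simp_all
  have "0 < b0*d0 div d1" "0 < a1*c1 div a0" "0 < b2*d2 div d3" "0 < a3*c3 div a2"
    using pos cancel by (metis mult_is_0 neq0_conv)+
  then show "chainable_arch [pstar_list xs, pstar_list ys]"
    unfolding P(1) Q(1) using pos step dvd cancel junction(2)
    by (simp add: chainable_arch_def architecture_def pattern_ok_iff chainable_iff
        pat_rows_def pat_cols_def mult.assoc[symmetric])
  show "pstar (pstar_list xs) (pstar_list ys) = pstar_list (xs @ ys)"
    unfolding P(1) Q(1) PQ pstar_def using cancel by (simp add: mult.assoc[symmetric])
qed

section \<open>Two chainable patterns\<close>

lemma mixed_radix_digits:
  fixes Q x z r d :: nat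
  assumes "x < r" "z < d"
  shows "((Q * r + x) * d + z) div (r * d) = Q" "((Q * r + x) * d + z) div d mod r = x"
    "((Q * r + x) * d + z) mod d = z"
proof -
  have d: "((Q * r + x) * d + z) div d = Q * r + x"
    using assms(2) by (rule mult_add_div_cancel)
  then show "((Q * r + x) * d + z) div (r * d) = Q"
    using assms(1) by (simp add: div_mult2_eq mult.commute[of r d])
  show "((Q * r + x) * d + z) div d mod r = x"
    using d assms(1) by simp
  show "((Q * r + x) * d + z) mod d = z"
    using assms(2) by simp
qed

locale chainable_pair =
  fixes p q :: pattern and a1 b1 c1 d1 a2 b2 c2 d2 :: nat
  assumes p_eq: "p = (a1,b1,c1,d1)" and q_eq: "q = (a2,b2,c2,d2)"
    and chainable_arch: "chainable_arch [p, q]"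
begin

lemma positive: "0 < a1" "0 < b1" "0 < c1" "0 < d1" "0 < a2" "0 < b2" "0 < c2" "0 < d2"
  using chainable_arch_pairD(1,2)[OF chainable_arch] by (simp_all add: p_eq q_eq pattern_ok_iff)

lemma chainable_conds: "a2 dvd a1*c1" "d1 dvd b2*d2" "a1*c1 div a2 = b2*d2 div d1" "a1 dvd a2" "d2 dvd d1"
  and dims: "a1*c1*d1 = a2*b2*d2"
  using chainable_arch_appendD[of "[p]" "[q]"] chainable_arch
  by (simp_all add: p_eq q_eq chainable_iff pat_rows_def pat_cols_def)

abbreviation r where "r \<equiv> a1*c1 div a2"

abbreviation s where "s \<equiv> a2 div a1"

lemma chain_r_eq: "chain_r p q = r"
  by (simp add: chain_r_def p_eq q_eq)

lemma r_d1: "b2*d2 = r*d1" and r_pos: "0 < r"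
proof -
  show "b2*d2 = r*d1"
    using chainable_conds(2,3) by simp
  then show "0 < r"
    using positive by (metis mult_is_0 neq0_conv)
qed

lemma c1d1: "c1*d1 = s*(r*d1)"
proof -
  have "a1*(c1*d1) = a1*(s*(r*d1))"
    using dims chainable_conds(4) by (simp add: r_d1 mult.assoc[symmetric])
  then show ?thesis
    using positive(1) by simp
qed

lemma inner_dim: "a1*c1*d1 = a2*(r*d1)" "a2*b2*d2 = a2*(r*d1)"
  using dims r_d1 by (simp_all add: mult.assoc)

lemma below_inner_dim: "k < a2*(r*d1) \<longleftrightarrow> k div (r*d1) < a2"
  using r_pos positive(4) by (simp add: div_less_iff_less_mult mult.commute)

text \<open>Write an inner index as \<open>k = (Q * r + x) * d1 + z\<close> with \<open>x < r\<close> and \<open>z < d1\<close>.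
  Column \<open>k\<close> of \<open>S\<^sub>p\<close> and row \<open>k\<close> of \<open>S\<^sub>q\<close> depend only on \<open>(Q, z)\<close>; the \<open>r\<close> indices sharing
  \<open>(Q, z)\<close> form the class of \<open>k\<close>, enumerated by \<open>class_elem k\<close>.\<close>

lemma supp_p_iff:
  "supp p i k \<longleftrightarrow> i < a1*b1*d1 \<and> k div (r*d1) < a2 \<and> i div (b1*d1) = k div (r*d1) div s \<and>
     i mod d1 = k mod d1"
proof -
  have "k div (c1*d1) = k div (r*d1) div s"
    by (simp add: c1d1 div_mult2_eq mult.commute[of s])
  then show ?thesis
    unfolding p_eq supp_iff inner_dim below_inner_dim by simp
qed

lemma supp_q_iff:
  "supp q k j \<longleftrightarrow> k div (r*d1) < a2 \<and> j < a2*c2*d2 \<and> j div (c2*d2) = k div (r*d1) \<and>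
     j mod d2 = k mod d1 mod d2"
proof -
  have "k < a2*b2*d2 \<longleftrightarrow> k div (r*d1) < a2"
    by (simp only: inner_dim(2) below_inner_dim)
  moreover have "k div (b2*d2) = k div (r*d1)"
    by (simp add: r_d1)
  ultimately show ?thesis
    unfolding q_eq supp_iff mod_mod_cancel[OF chainable_conds(5)] by auto
qed

lemma supp_pstar_iff:
  "supp (pstar p q) i j \<longleftrightarrow> i < a1*b1*d1 \<and> j < a2*c2*d2 \<and> i div (b1*d1) = j div (c2*d2) div s \<and>
     i mod d2 = j mod d2"
proof -
  have "a2*c2 div a1 = s*c2"
    using dvd_div_mult[OF chainable_conds(4)] by simp
  then have pstar: "pstar p q = (a1, b1*d1 div d2, s*c2, d2)"
    by (simp add: p_eq q_eq pstar_def)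
  have b: "b1*d1 div d2 * d2 = b1*d1"
    using chainable_conds(5) by simp
  then have rows: "a1 * (b1*d1 div d2) * d2 = a1*b1*d1"
    by (simp add: mult.assoc)
  have cols: "a1 * (s*c2) * d2 = a2*c2*d2"
    using chainable_conds(4) by (simp add: mult.assoc[symmetric])
  have "j div (s*c2*d2) = j div (c2*d2) div s"
    by (simp add: div_mult2_eq mult.commute mult.left_commute)
  then show ?thesis
    unfolding pstar supp_iff by (simp only: b rows cols)
qed

lemma pstar_dims: "pat_rows (pstar p q) = pat_rows p" "pat_cols (pstar p q) = pat_cols q"
proof -
  have "pat_rows (pstar p q) = a1 * (b1*d1 div d2) * d2" "pat_cols (pstar p q) = a1 * (a2*c2 div a1) * d2"
    by (simp_all add: p_eq q_eq pstar_def pat_rows_def pat_cols_def)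
  then show "pat_rows (pstar p q) = pat_rows p" "pat_cols (pstar p q) = pat_cols q"
    using chainable_conds(4,5) by (simp_all add: p_eq q_eq pat_rows_def pat_cols_def mult.assoc)
qed

lemma supp_pstar: "supp (pstar p q) i j \<longleftrightarrow> (\<exists>k. supp p i k \<and> supp q k j)"
proof
  assume "\<exists>k. supp p i k \<and> supp q k j"
  moreover have "i mod d2 = i mod d1 mod d2"
    by (simp add: mod_mod_cancel[OF chainable_conds(5)])
  ultimately show "supp (pstar p q) i j"
    by (auto simp: supp_p_iff supp_q_iff supp_pstar_iff)
next
  assume ij: "supp (pstar p q) i j"
  define k where "k = (j div (c2*d2) * r + 0) * d1 + i mod d1"
  have "k div (r*d1) = j div (c2*d2)" "k mod d1 = i mod d1"
    using mixed_radix_digits[OF r_pos, of "i mod d1" d1] positive(4) by (simp_all add: k_def)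
  moreover have "j div (c2*d2) < a2"
    using ij by (simp add: supp_pstar_iff less_mult_imp_div_less mult.assoc)
  ultimately have "supp p i k \<and> supp q k j"
    using ij by (simp add: supp_p_iff supp_q_iff supp_pstar_iff mod_mod_cancel[OF chainable_conds(5)])
  then show "\<exists>k. supp p i k \<and> supp q k j" ..
qed

definition class_elem :: "nat \<Rightarrow> nat \<Rightarrow> nat" where
  "class_elem k x = (k div (r*d1) * r + x) * d1 + k mod d1"

lemma class_elem_digits:
  assumes "x < r"
  shows "class_elem k x div (r*d1) = k div (r*d1)" "class_elem k x mod d1 = k mod d1"
    "class_elem k x div d1 mod r = x"
  using mixed_radix_digits[OF assms, of "k mod d1" d1] positive(4) by (simp_all add: class_elem_def)

lemma class_elem_self: "class_elem k (k div d1 mod r) = k"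
proof -
  have "k div (r*d1) = k div d1 div r"
    by (simp add: div_mult2_eq mult.commute)
  moreover have "k div d1 div r * r + k div d1 mod r = k div d1" "k div d1 * d1 + k mod d1 = k"
    by (rule div_mult_mod_eq)+
  ultimately show ?thesis
    by (simp only: class_elem_def)
qed

lemma class_elem_class_elem:
  assumes "x < r"
  shows "class_elem (class_elem k x) y = class_elem k y"
  using class_elem_digits(1,2)[OF assms, of k]
  by (simp only: class_elem_def[of "class_elem k x" y] class_elem_def[of k y])

lemma supp_class_elem:
  assumes "x < r"
  shows "supp p i (class_elem k x) \<longleftrightarrow> supp p i k" "supp q (class_elem k x) j \<longleftrightarrow> supp q k j"
  using class_elem_digits(1,2)[OF assms] by (simp_all add: supp_p_iff supp_q_iff)

lemma middle_indices:
  assumes "supp p i k" "supp q k j"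
  shows "{k'. supp p i k' \<and> supp q k' j} = class_elem k ` {..<r}"
proof (intro equalityI subsetI)
  fix k' assume "k' \<in> {k'. supp p i k' \<and> supp q k' j}"
  then have "k' div (r*d1) = k div (r*d1)" "k' mod d1 = k mod d1"
    using assms by (simp_all add: supp_p_iff supp_q_iff)
  then have "k' = class_elem k (k' div d1 mod r)"
    using class_elem_self[of k'] by (simp add: class_elem_def)
  then show "k' \<in> class_elem k ` {..<r}"
    using r_pos by simp
next
  fix k' assume "k' \<in> class_elem k ` {..<r}"
  then show "k' \<in> {k'. supp p i k' \<and> supp q k' j}"
    using assms supp_class_elem by auto
qed

lemma inj_on_class_elem: "inj_on (class_elem k) {..<r}"
  by (rule inj_onI) (metis class_elem_digits(3) lessThan_iff)

lemma mult_factors_index_class: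
  assumes "X \<in> factors p" "Y \<in> factors q" "supp p i k" "supp q k j"
  shows "(X * Y) $$ (i,j) = (\<Sum>x<r. X $$ (i, class_elem k x) * Y $$ (class_elem k x, j))"
proof -
  have "pat_cols p = pat_rows q" "i < pat_rows p" "j < pat_cols q"
    using assms(3,4) chainable_arch_pairD(3)[OF chainable_arch] by (auto simp: supp_def)
  then have "(X * Y) $$ (i,j) = (\<Sum>k' | supp p i k' \<and> supp q k' j. X $$ (i,k') * Y $$ (k',j))"
    by (rule mult_factors_index[OF assms(1,2)])
  also have "\<dots> = (\<Sum>x<r. X $$ (i, class_elem k x) * Y $$ (class_elem k x, j))"
    unfolding middle_indices[OF assms(3,4)] by (simp add: sum.reindex[OF inj_on_class_elem])
  finally show ?thesis .
qed

end

lemma chainable_arch_pairE: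
  assumes "chainable_arch [p, q]"
  obtains a1 b1 c1 d1 a2 b2 c2 d2 where "chainable_pair p q a1 b1 c1 d1 a2 b2 c2 d2"
  using assms by (cases p; cases q) (auto simp: chainable_pair_def)

lemma supp_pstar:
  assumes "chainable_arch [p, q]"
  shows "supp (pstar p q) i j \<longleftrightarrow> (\<exists>k. supp p i k \<and> supp q k j)"
  using chainable_arch_pairE[OF assms] chainable_pair.supp_pstar by metis

lemma pstar_dims:
  assumes "chainable_arch [p, q]"
  shows "pat_rows (pstar p q) = pat_rows p" "pat_cols (pstar p q) = pat_cols q"
  using chainable_arch_pairE[OF assms] chainable_pair.pstar_dims by metis+

lemma mult_factors_pstar:
  assumes pq: "chainable_arch [p, q]" and X: "X \<in> factors p" and Y: "Y \<in> factors q"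
  shows "X * Y \<in> factors (pstar p q)"
  unfolding factors_iff pstar_dims[OF pq]
proof (intro conjI allI impI)
  have "X \<in> carrier_mat (pat_rows p) (pat_cols p)" "Y \<in> carrier_mat (pat_rows q) (pat_cols q)"
    using X Y by (simp_all add: factors_iff)
  then show "X * Y \<in> carrier_mat (pat_rows p) (pat_cols q)"
    using chainable_arch_pairD(3)[OF pq] by auto
  fix i j assume ij: "i < pat_rows p" "j < pat_cols q" and "\<not> supp (pstar p q) i j"
  then have none: "{k. supp p i k \<and> supp q k j} = {}"
    using supp_pstar[OF pq] by auto
  show "(X * Y) $$ (i,j) = 0"
    unfolding mult_factors_index[OF X Y chainable_arch_pairD(3)[OF pq] ij] none by simp
qed

context chainable_pair
begin

lemma mult_in_Mset:
  assumes X: "X \<in> factors p" and Y: "Y \<in> factors q"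
  shows "X * Y \<in> Mset (p, q)"
  unfolding Mset_iff[OF chainable_arch_pairD[OF chainable_arch]] chain_r_eq
proof (intro conjI allI impI)
  show "X * Y \<in> carrier_mat (pat_rows p) (pat_cols q)"
    using mult_factors_pstar[OF chainable_arch X Y] by (simp add: factors_iff pstar_dims)
  fix k assume "k < pat_cols p"
  show "submatrix_rank (X * Y) {i. supp p i k} {j. supp q k j} \<le> r"
  proof (rule submatrix_rank_le)
    fix i j assume "i \<in> {i. supp p i k}" "j \<in> {j. supp q k j}"
    then show "(X * Y) $$ (i,j) = (\<Sum>x<r. X $$ (i, class_elem k x) * Y $$ (class_elem k x, j))"
      by (intro mult_factors_index_class[OF X Y]) simp_all
  qed
qed

definition block_factorization ::
    "complex mat \<Rightarrow> (nat \<Rightarrow> nat \<Rightarrow> nat) \<Rightarrow> (nat \<Rightarrow> nat \<Rightarrow> nat \<Rightarrow> complex) \<Rightarrow> bool" where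
  "block_factorization A \<sigma> g \<longleftrightarrow> (\<forall>k<pat_cols p. (\<forall>x. supp q k (\<sigma> k x)) \<and>
     (\<forall>i j. supp p i k \<longrightarrow> supp q k j \<longrightarrow> A $$ (i,j) = (\<Sum>x<r. A $$ (i, \<sigma> k x) * g k x j)))"

lemma block_factorization_exists:
  assumes AM: "A \<in> Mset (p, q)"
  obtains \<sigma> g where "block_factorization A \<sigma> g"
proof -
  define P where "P k \<sigma> g \<longleftrightarrow> (\<forall>x. supp q k (\<sigma> x)) \<and>
      (\<forall>i j. supp p i k \<longrightarrow> supp q k j \<longrightarrow> A $$ (i,j) = (\<Sum>x<r. A $$ (i, \<sigma> x) * g x j))"
    for k and \<sigma> :: "nat \<Rightarrow> nat" and g :: "nat \<Rightarrow> nat \<Rightarrow> complex"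
  have "\<exists>\<sigma> g. k < pat_cols p \<longrightarrow> P k \<sigma> g" for k
  proof (cases "k < pat_cols p")
    case True
    obtain \<sigma> g where "\<And>x. supp q k (\<sigma> x)"
      "\<And>i j. supp p i k \<Longrightarrow> supp q k j \<Longrightarrow> A $$ (i,j) = (\<Sum>x<r. A $$ (i, \<sigma> x) * g x j)"
      using Mset_block_factorization[OF chainable_arch_pairD[OF chainable_arch] AM True,
          unfolded chain_r_eq] by blast
    then show ?thesis
      unfolding P_def by blast
  qed simp
  then obtain \<sigma> where "\<forall>k. \<exists>g. k < pat_cols p \<longrightarrow> P k (\<sigma> k) g"
    using choice[of "\<lambda>k \<sigma>. \<exists>g. k < pat_cols p \<longrightarrow> P k \<sigma> g"] by blast
  then obtain g where "\<forall>k. k < pat_cols p \<longrightarrow> P k (\<sigma> k) (g k)"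
    using choice[of "\<lambda>k g. k < pat_cols p \<longrightarrow> P k (\<sigma> k) g"] by blast
  then have "block_factorization A \<sigma> g"
    unfolding block_factorization_def P_def by blast
  then show thesis ..
qed

text \<open>The factorization of the block of \<open>k\<close> is the one chosen for the class representative
  \<open>class_elem k 0\<close>; its \<open>x\<close>-th term is carried by the class member \<open>class_elem k x\<close>, which
  is how the position \<open>k div d1 mod r\<close> enters.\<close>

definition left_factor :: "complex mat \<Rightarrow> (nat \<Rightarrow> nat \<Rightarrow> nat) \<Rightarrow> complex mat" where
  "left_factor A \<sigma> = mat (pat_rows p) (pat_cols p)
    (\<lambda>(i,k). if supp p i k then A $$ (i, \<sigma> (class_elem k 0) (k div d1 mod r)) else 0)"

definition right_factor :: "(nat \<Rightarrow> nat \<Rightarrow> nat \<Rightarrow> complex) \<Rightarrow> complex mat" where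
  "right_factor g = mat (pat_rows q) (pat_cols q)
    (\<lambda>(k,j). if supp q k j then g (class_elem k 0) (k div d1 mod r) j else 0)"

lemma left_factor_in_factors: "left_factor A \<sigma> \<in> factors p"
  by (auto simp: factors_iff left_factor_def)

lemma right_factor_in_factors: "right_factor g \<in> factors q"
  by (auto simp: factors_iff right_factor_def)

lemma class_elem_0_bound:
  assumes "supp p i k"
  shows "class_elem k 0 < pat_cols p"
  using assms supp_class_elem(1)[OF r_pos, of i k] by (simp add: supp_def)

lemma left_right_factor_mult:
  assumes A: "A \<in> factors (pstar p q)" and fac: "block_factorization A \<sigma> g"
  shows "left_factor A \<sigma> * right_factor g = A"
proof (rule eq_matI)
  let ?X = "left_factor A \<sigma>" and ?Y = "right_factor g"
  have AC: "A \<in> carrier_mat (pat_rows p) (pat_cols q)"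
    using A by (simp add: factors_iff pstar_dims)
  then show "dim_row (?X * ?Y) = dim_row A" "dim_col (?X * ?Y) = dim_col A"
    by (simp_all add: left_factor_def right_factor_def)
  fix i j assume "i < dim_row A" "j < dim_col A"
  then have ij: "i < pat_rows p" "j < pat_cols q"
    using AC by simp_all
  show "(?X * ?Y) $$ (i,j) = A $$ (i,j)"
  proof (cases "supp (pstar p q) i j")
    case True
    then obtain k where k: "supp p i k" "supp q k j"
      using supp_pstar by blast
    let ?k0 = "class_elem k 0"
    have "(?X * ?Y) $$ (i,j) = (\<Sum>x<r. ?X $$ (i, class_elem k x) * ?Y $$ (class_elem k x, j))"
      by (rule mult_factors_index_class[OF left_factor_in_factors right_factor_in_factors k])
    also have "\<dots> = (\<Sum>x<r. A $$ (i, \<sigma> ?k0 x) * g ?k0 x j)"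
    proof (rule sum.cong)
      fix x assume "x \<in> {..<r}"
      then have "supp p i (class_elem k x)" "supp q (class_elem k x) j"
        "class_elem (class_elem k x) 0 = ?k0" "class_elem k x div d1 mod r = x"
        using supp_class_elem class_elem_class_elem class_elem_digits(3) k by simp_all
      then show "?X $$ (i, class_elem k x) * ?Y $$ (class_elem k x, j) = A $$ (i, \<sigma> ?k0 x) * g ?k0 x j"
        by (simp add: left_factor_def right_factor_def supp_def)
    qed simp
    also have "\<dots> = A $$ (i,j)"
      using fac class_elem_0_bound[OF k(1)] supp_class_elem[OF r_pos] k
      unfolding block_factorization_def by (blast intro: sym)
    finally show ?thesis .
  next
    case False
    then show ?thesis
      using A mult_factors_pstar[OF chainable_arch left_factor_in_factors right_factor_in_factors] ij
      by (simp add: factors_iff pstar_dims)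
  qed
qed

lemma left_factor_column:
  assumes fac: "block_factorization A \<sigma> g" and k: "k < pat_cols p"
  shows "\<exists>j. supp q k j \<and> (\<forall>i. supp p i k \<longrightarrow> left_factor A \<sigma> $$ (i,k) = A $$ (i,j))"
proof -
  let ?k0 = "class_elem k 0"
  obtain i0 where "supp p i0 k"
    using supp_in_col[OF chainable_arch_pairD(1)[OF chainable_arch] k] .
  then have "?k0 < pat_cols p"
    by (rule class_elem_0_bound)
  then have "supp q k (\<sigma> ?k0 (k div d1 mod r))"
    using fac supp_class_elem(2)[OF r_pos] unfolding block_factorization_def by blast
  moreover have "left_factor A \<sigma> $$ (i,k) = A $$ (i, \<sigma> ?k0 (k div d1 mod r))" if "supp p i k" for i
    using that by (simp add: left_factor_def supp_def)
  ultimately show ?thesis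
    by blast
qed

lemma factorization:
  assumes "A \<in> factors (pstar p q)" "A \<in> Mset (p, q)"
  obtains X Y where "X \<in> factors p" "Y \<in> factors q" "A = X * Y"
    "\<And>k. k < pat_cols p \<Longrightarrow> \<exists>j. supp q k j \<and> (\<forall>i. supp p i k \<longrightarrow> X $$ (i,k) = A $$ (i,j))"
proof -
  obtain \<sigma> g where fac: "block_factorization A \<sigma> g"
    using block_factorization_exists[OF assms(2)] .
  show thesis
    using that[OF left_factor_in_factors right_factor_in_factors
        left_right_factor_mult[OF assms(1) fac, symmetric] left_factor_column[OF fac]] .
qed

end

lemma mult_in_Mset:
  assumes "chainable_arch [p, q]" "X \<in> factors p" "Y \<in> factors q"
  shows "X * Y \<in> Mset (p, q)"
proof -
  obtain a1 b1 c1 d1 a2 b2 c2 d2 where "chainable_pair p q a1 b1 c1 d1 a2 b2 c2 d2"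
    using chainable_arch_pairE[OF assms(1)] .
  then interpret chainable_pair p q a1 b1 c1 d1 a2 b2 c2 d2 .
  show ?thesis
    using mult_in_Mset[OF assms(2,3)] .
qed

lemma factorization_through_columns:
  assumes "chainable_arch [p, q]" "A \<in> factors (pstar p q)" "A \<in> Mset (p, q)"
  obtains X Y where "X \<in> factors p" "Y \<in> factors q" "A = X * Y"
    "\<And>k. k < pat_cols p \<Longrightarrow> \<exists>j. supp q k j \<and> (\<forall>i. supp p i k \<longrightarrow> X $$ (i,k) = A $$ (i,j))"
proof -
  obtain a1 b1 c1 d1 a2 b2 c2 d2 where "chainable_pair p q a1 b1 c1 d1 a2 b2 c2 d2"
    using chainable_arch_pairE[OF assms(1)] .
  then interpret chainable_pair p q a1 b1 c1 d1 a2 b2 c2 d2 .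
  show thesis
    using factorization[OF assms(2,3)] that by blast
qed

section \<open>Products of factors\<close>

lemma mprod_Cons: "Xs \<noteq> [] \<Longrightarrow> mprod (X # Xs) = X * mprod Xs"
  by (cases Xs) simp_all

lemma Bset_list_all2: "Bset \<beta> = {mprod Xs | Xs. list_all2 (\<lambda>X \<pi>. X \<in> factors \<pi>) Xs \<beta>}"
  unfolding Bset_def list_all2_conv_all_nth by metis

lemma Bset_single: "Bset [p] = factors p"
  by (auto simp: Bset_list_all2 list_all2_Cons2 intro!: exI[of _ "[_]"])

lemma Bset_Cons:
  assumes "\<beta> \<noteq> []"
  shows "Bset (p # \<beta>) = {X * Y | X Y. X \<in> factors p \<and> Y \<in> Bset \<beta>}"
proof (intro equalityI subsetI)
  fix A assume "A \<in> Bset (p # \<beta>)"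
  then obtain X Xs where A: "A = mprod (X # Xs)" and X: "X \<in> factors p"
    and Xs: "list_all2 (\<lambda>X \<pi>. X \<in> factors \<pi>) Xs \<beta>"
    unfolding Bset_list_all2 by (auto simp: list_all2_Cons2)
  have "Xs \<noteq> []"
    using Xs assms by (auto dest: list_all2_lengthD)
  then have "A = X * mprod Xs"
    using A by (simp add: mprod_Cons)
  moreover have "mprod Xs \<in> Bset \<beta>"
    using Xs unfolding Bset_list_all2 by blast
  ultimately show "A \<in> {X * Y | X Y. X \<in> factors p \<and> Y \<in> Bset \<beta>}"
    using X by blast
next
  fix A assume "A \<in> {X * Y | X Y. X \<in> factors p \<and> Y \<in> Bset \<beta>}"
  then obtain X Xs where A: "A = X * mprod Xs" and X: "X \<in> factors p"
    and Xs: "list_all2 (\<lambda>X \<pi>. X \<in> factors \<pi>) Xs \<beta>"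
    unfolding Bset_list_all2 by blast
  have "Xs \<noteq> []"
    using Xs assms by (auto dest: list_all2_lengthD)
  then have "A = mprod (X # Xs)"
    using A by (simp add: mprod_Cons)
  moreover have "list_all2 (\<lambda>X \<pi>. X \<in> factors \<pi>) (X # Xs) (p # \<beta>)"
    using X Xs by simp
  ultimately show "A \<in> Bset (p # \<beta>)"
    unfolding Bset_list_all2 by blast
qed

lemma Bset_carrier:
  "chainable_arch \<beta> \<Longrightarrow> A \<in> Bset \<beta> \<Longrightarrow> A \<in> carrier_mat (pat_rows (hd \<beta>)) (pat_cols (last \<beta>))"
proof (induction \<beta> arbitrary: A)
  case Nil
  then show ?case
    by (simp add: chainable_arch_def architecture_def)
next
  case (Cons p \<beta>)
  show ?case
  proof (cases "\<beta> = []")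
    case True
    then show ?thesis
      using Cons.prems(2) by (simp add: Bset_single factors_iff)
  next
    case False
    then obtain X Y where "A = X * Y" "X \<in> factors p" "Y \<in> Bset \<beta>"
      using Cons.prems(2) Bset_Cons by blast
    moreover have "chainable_arch \<beta>" "pat_cols p = pat_rows (hd \<beta>)"
      using chainable_arch_appendD[of "[p]" \<beta>] Cons.prems(1) False by simp_all
    ultimately show ?thesis
      using Cons.IH False by (fastforce simp: factors_iff)
  qed
qed

lemma set_mult_assoc:
  fixes S T U :: "'a::times set"
  assumes "\<And>X Y Z. X \<in> S \<Longrightarrow> Y \<in> T \<Longrightarrow> Z \<in> U \<Longrightarrow> X * (Y * Z) = X * Y * Z"
  shows "{X * W | X W. X \<in> S \<and> W \<in> {Y * Z | Y Z. Y \<in> T \<and> Z \<in> U}} =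
    {V * Z | V Z. V \<in> {X * Y | X Y. X \<in> S \<and> Y \<in> T} \<and> Z \<in> U}"
proof (intro equalityI subsetI)
  fix A assume "A \<in> {X * W | X W. X \<in> S \<and> W \<in> {Y * Z | Y Z. Y \<in> T \<and> Z \<in> U}}"
  then obtain X Y Z where "A = X * (Y * Z)" "X \<in> S" "Y \<in> T" "Z \<in> U"
    by blast
  moreover from this have "A = X * Y * Z"
    using assms by simp
  ultimately show "A \<in> {V * Z | V Z. V \<in> {X * Y | X Y. X \<in> S \<and> Y \<in> T} \<and> Z \<in> U}"
    by blast
next
  fix A assume "A \<in> {V * Z | V Z. V \<in> {X * Y | X Y. X \<in> S \<and> Y \<in> T} \<and> Z \<in> U}"
  then obtain X Y Z where "A = X * Y * Z" "X \<in> S" "Y \<in> T" "Z \<in> U"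
    by blast
  moreover from this have "A = X * (Y * Z)"
    using assms by simp
  ultimately show "A \<in> {X * W | X W. X \<in> S \<and> W \<in> {Y * Z | Y Z. Y \<in> T \<and> Z \<in> U}}"
    by blast
qed

lemma Bset_append:
  assumes "chainable_arch (xs @ ys)" "xs \<noteq> []" "ys \<noteq> []"
  shows "Bset (xs @ ys) = {X * Y | X Y. X \<in> Bset xs \<and> Y \<in> Bset ys}"
  using assms
proof (induction xs)
  case Nil
  then show ?case by simp
next
  case (Cons p xs)
  show ?case
  proof (cases "xs = []")
    case True
    then show ?thesis
      using Cons.prems(3) by (simp add: Bset_Cons Bset_single)
  next
    case False
    have ch: "chainable_arch (xs @ ys)" "pat_cols p = pat_rows (hd xs)"
      using chainable_arch_appendD[of "[p]" "xs @ ys"] Cons.prems(1) False by simp_all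
    have "chainable_arch xs" "chainable_arch ys" "pat_cols (last xs) = pat_rows (hd ys)"
      using chainable_arch_appendD[OF ch(1) False Cons.prems(3)] by simp_all
    then have assoc: "X * (Y * Z) = X * Y * Z" if "X \<in> factors p" "Y \<in> Bset xs" "Z \<in> Bset ys" for X Y Z
      using that ch(2) Bset_carrier by (intro assoc_mult_mat[symmetric]) (auto simp: factors_iff)
    have "Bset ((p # xs) @ ys) = {X * W | X W. X \<in> factors p \<and> W \<in> Bset (xs @ ys)}"
      using False by (simp add: Bset_Cons)
    also have "\<dots> = {X * W | X W. X \<in> factors p \<and> W \<in> {Y * Z | Y Z. Y \<in> Bset xs \<and> Z \<in> Bset ys}}"
      unfolding Cons.IH[OF ch(1) False Cons.prems(3)] ..
    also have "\<dots> = {V * Z | V Z. V \<in> {X * Y | X Y. X \<in> factors p \<and> Y \<in> Bset xs} \<and> Z \<in> Bset ys}"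
      using assoc by (rule set_mult_assoc)
    also have "\<dots> = {V * Z | V Z. V \<in> Bset (p # xs) \<and> Z \<in> Bset ys}"
      unfolding Bset_Cons[OF False] ..
    finally show ?thesis .
  qed
qed

lemma Bset_snoc:
  assumes "chainable_arch (\<beta> @ [s])" "\<beta> \<noteq> []"
  shows "Bset (\<beta> @ [s]) = {X * Y | X Y. X \<in> Bset \<beta> \<and> Y \<in> factors s}"
  using Bset_append[OF assms] by (simp add: Bset_single)

lemma Bset_pair:
  assumes "chainable_arch [p, q]"
  shows "Bset [p, q] = factors (pstar p q) \<inter> Mset (p, q)"
proof (intro equalityI subsetI)
  fix A assume "A \<in> Bset [p, q]"
  then have "A \<in> {X * Y | X Y. X \<in> factors p \<and> Y \<in> factors q}"
    by (simp add: Bset_Cons Bset_single)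
  then obtain X Y where A: "A = X * Y" and X: "X \<in> factors p" and Y: "Y \<in> factors q"
    by blast
  show "A \<in> factors (pstar p q) \<inter> Mset (p, q)"
    unfolding A using mult_factors_pstar[OF assms X Y] mult_in_Mset[OF assms X Y] by (rule IntI)
next
  fix A assume "A \<in> factors (pstar p q) \<inter> Mset (p, q)"
  then obtain X Y where "A = X * Y" "X \<in> factors p" "Y \<in> factors q"
    using factorization_through_columns[OF assms] by (metis IntD1 IntD2)
  then have "A \<in> {X * Y | X Y. X \<in> factors p \<and> Y \<in> factors q}"
    by blast
  then show "A \<in> Bset [p, q]"
    by (simp add: Bset_Cons Bset_single)
qed

lemma Bset_subset_factors: "chainable_arch \<beta> \<Longrightarrow> Bset \<beta> \<subseteq> factors (pstar_list \<beta>)"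
proof (induction \<beta> rule: rev_induct)
  case Nil
  then show ?case
    by (simp add: chainable_arch_def architecture_def)
next
  case (snoc s \<beta>)
  show ?case
  proof (cases "\<beta> = []")
    case True
    then show ?thesis
      by (simp add: Bset_single)
  next
    case False
    have pair: "chainable_arch [pstar_list \<beta>, s]" "pstar (pstar_list \<beta>) s = pstar_list (\<beta> @ [s])"
      using pstar_list_append[OF snoc.prems False] by simp_all
    have IH: "Bset \<beta> \<subseteq> factors (pstar_list \<beta>)"
      using snoc.IH chainable_arch_appendD(1)[OF snoc.prems False] by simp
    show ?thesis
    proof
      fix A assume "A \<in> Bset (\<beta> @ [s])"
      then obtain X Y where "A = X * Y" "X \<in> Bset \<beta>" "Y \<in> factors s"
        using Bset_snoc[OF snoc.prems False] by blast
      then show "A \<in> factors (pstar_list (\<beta> @ [s]))"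
        using IH mult_factors_pstar[OF pair(1)] pair(2) by auto
    qed
  qed
qed

lemma beta_split_chainable:
  assumes "chainable_arch \<beta>" "l \<in> {1..length \<beta> - 1}"
  shows "chainable_arch [fst (beta_split \<beta> l), snd (beta_split \<beta> l)]"
    "pstar (fst (beta_split \<beta> l)) (snd (beta_split \<beta> l)) = pstar_list \<beta>"
proof -
  have "chainable_arch (take l \<beta> @ drop l \<beta>)" "take l \<beta> \<noteq> []" "drop l \<beta> \<noteq> []"
    using assms by auto
  from pstar_list_append[OF this] show
    "chainable_arch [fst (beta_split \<beta> l), snd (beta_split \<beta> l)]"
    "pstar (fst (beta_split \<beta> l)) (snd (beta_split \<beta> l)) = pstar_list \<beta>"
    by (simp_all add: beta_split_def)
qed

lemma Bset_beta_split:
  assumes "chainable_arch \<beta>" "l \<in> {1..length \<beta> - 1}"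
  shows "Bset [fst (beta_split \<beta> l), snd (beta_split \<beta> l)] = factors (pstar_list \<beta>) \<inter> Mset (beta_split \<beta> l)"
  using Bset_pair[OF beta_split_chainable(1)[OF assms]] beta_split_chainable(2)[OF assms] by simp

lemma Bset_subset_Bset_beta_split:
  assumes "chainable_arch \<beta>" "l \<in> {1..length \<beta> - 1}"
  shows "Bset \<beta> \<subseteq> Bset [fst (beta_split \<beta> l), snd (beta_split \<beta> l)]"
proof -
  have split: "chainable_arch (take l \<beta> @ drop l \<beta>)" "take l \<beta> \<noteq> []" "drop l \<beta> \<noteq> []"
    using assms by auto
  have "Bset (take l \<beta>) \<subseteq> factors (pstar_list (take l \<beta>))"
    "Bset (drop l \<beta>) \<subseteq> factors (pstar_list (drop l \<beta>))"
    using Bset_subset_factors chainable_arch_appendD(1,2)[OF split] by simp_all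
  then show ?thesis
    using Bset_append[OF split] by (auto simp: Bset_Cons Bset_single beta_split_def)
qed

section \<open>Splitting off the last factor\<close>

lemma chain_r_pstar_right: "chain_r p (pstar q s) = chain_r p q"
  by (cases p; cases q; cases s) (simp add: chain_r_def pstar_def)

lemma Mset_of_selected_columns:
  assumes pq: "chainable_arch [p, q]" and qs: "chainable_arch [q, s]"
    and p_qs: "chainable_arch [p, pstar q s]"
    and A: "A \<in> Mset (p, pstar q s)" and Z: "Z \<in> carrier_mat (pat_rows p) (pat_cols q)"
    and sel: "\<And>k. k < pat_cols q \<Longrightarrow> \<exists>j. supp s k j \<and> (\<forall>i. supp (pstar p q) i k \<longrightarrow> Z $$ (i,k) = A $$ (i,j))"
  shows "Z \<in> Mset (p, q)"
  unfolding Mset_iff[OF chainable_arch_pairD[OF pq]]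
proof (intro conjI allI impI)
  show "Z \<in> carrier_mat (pat_rows p) (pat_cols q)"
    using Z .
  obtain \<tau> where \<tau>: "\<And>k. k < pat_cols q \<Longrightarrow>
      supp s k (\<tau> k) \<and> (\<forall>i. supp (pstar p q) i k \<longrightarrow> Z $$ (i,k) = A $$ (i, \<tau> k))"
    using choice[of "\<lambda>k j. k < pat_cols q \<longrightarrow>
        supp s k j \<and> (\<forall>i. supp (pstar p q) i k \<longrightarrow> Z $$ (i,k) = A $$ (i,j))"] sel
    by blast
  fix k' assume k': "k' < pat_cols p"
  obtain \<sigma> g where "\<And>x. supp (pstar q s) k' (\<sigma> x)"
    and fac: "\<And>i j. supp p i k' \<Longrightarrow> supp (pstar q s) k' j \<Longrightarrow>
      A $$ (i,j) = (\<Sum>x<chain_r p q. A $$ (i, \<sigma> x) * g x j)"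
    using Mset_block_factorization[OF chainable_arch_pairD[OF p_qs] A k', unfolded chain_r_pstar_right]
    by blast
  show "submatrix_rank Z {i. supp p i k'} {k. supp q k' k} \<le> chain_r p q"
  proof (rule submatrix_rank_le)
    fix i k assume i: "i \<in> {i. supp p i k'}" and k: "k \<in> {k. supp q k' k}"
    have k_bound: "k < pat_cols q"
      using k by (simp add: supp_def)
    have "supp (pstar p q) i k"
      using supp_pstar[OF pq] i k by blast
    then have "Z $$ (i,k) = A $$ (i, \<tau> k)"
      using \<tau>[OF k_bound] by blast
    moreover have "supp (pstar q s) k' (\<tau> k)"
      using supp_pstar[OF qs] k \<tau>[OF k_bound] by blast
    ultimately show "Z $$ (i,k) = (\<Sum>x<chain_r p q. A $$ (i, \<sigma> x) * g x (\<tau> k))"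
      using fac[of i "\<tau> k"] i by simp
  qed
qed

lemma Mset_split_of_selected_columns:
  assumes ch: "chainable_arch (\<beta> @ [s])" and l: "0 < l" "l < length \<beta>"
    and A: "A \<in> Mset (beta_split (\<beta> @ [s]) l)" and Z: "Z \<in> factors (pstar_list \<beta>)"
    and sel: "\<And>k. k < pat_cols (pstar_list \<beta>) \<Longrightarrow>
      \<exists>j. supp s k j \<and> (\<forall>i. supp (pstar_list \<beta>) i k \<longrightarrow> Z $$ (i,k) = A $$ (i,j))"
  shows "Z \<in> Mset (beta_split \<beta> l)"
proof -
  let ?P = "pstar_list (take l \<beta>)" and ?Q = "pstar_list (drop l \<beta>)"
  have parts: "take l \<beta> \<noteq> []" "drop l \<beta> \<noteq> []" "[s] \<noteq> []"
    using l by auto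
  have "chainable_arch (take l \<beta> @ drop l \<beta>)"
    using chainable_arch_appendD(1)[OF ch] parts by auto
  then have PQ: "chainable_arch [?P, ?Q]" "pstar ?P ?Q = pstar_list \<beta>"
    using pstar_list_append[OF _ parts(1,2)] by simp_all
  have "chainable_arch (drop l \<beta> @ [s])"
    using chainable_arch_drop[OF ch, of l] l by simp
  then have Qs: "chainable_arch [?Q, s]" "pstar ?Q s = pstar_list (drop l \<beta> @ [s])"
    using pstar_list_append[OF _ parts(2,3)] by simp_all
  have "chainable_arch (take l \<beta> @ (drop l \<beta> @ [s]))"
    using ch by (simp flip: append_assoc)
  then have P_Qs: "chainable_arch [?P, pstar ?Q s]"
    using pstar_list_append(1)[OF _ parts(1)] Qs(2) by simp
  have beta: "beta_split (\<beta> @ [s]) l = (?P, pstar ?Q s)" "beta_split \<beta> l = (?P, ?Q)"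
    unfolding beta_split_def using l Qs(2) by simp_all
  show ?thesis
    unfolding beta(2)
  proof (rule Mset_of_selected_columns[OF PQ(1) Qs(1) P_Qs])
    show "A \<in> Mset (?P, pstar ?Q s)"
      using A beta(1) by simp
    show "Z \<in> carrier_mat (pat_rows ?P) (pat_cols ?Q)"
      using Z pstar_dims[OF PQ(1)] PQ(2) by (simp add: factors_iff)
    show "\<exists>j. supp s k j \<and> (\<forall>i. supp (pstar ?P ?Q) i k \<longrightarrow> Z $$ (i,k) = A $$ (i,j))"
      if "k < pat_cols ?Q" for k
      using sel that pstar_dims(2)[OF PQ(1)] PQ(2) by simp
  qed
qed

lemma split_off_last_factor:
  assumes ch: "chainable_arch (\<beta> @ [s])" and \<beta>: "\<beta> \<noteq> []"
    and A: "A \<in> factors (pstar_list (\<beta> @ [s])) \<inter> (\<Inter>l\<in>{1..length \<beta>}. Mset (beta_split (\<beta> @ [s]) l))"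
  obtains Z Y where "Z \<in> factors (pstar_list \<beta>) \<inter> (\<Inter>l\<in>{1..length \<beta> - 1}. Mset (beta_split \<beta> l))"
    "Y \<in> factors s" "A = Z * Y"
proof -
  have last_split: "chainable_arch [pstar_list \<beta>, s]" "pstar (pstar_list \<beta>) s = pstar_list (\<beta> @ [s])"
    using pstar_list_append[OF ch \<beta>] by simp_all
  have "length \<beta> \<in> {1..length \<beta>}"
    using \<beta> by (simp add: Suc_leI)
  then have "A \<in> Mset (beta_split (\<beta> @ [s]) (length \<beta>))"
    using A by blast
  then have "A \<in> Mset (pstar_list \<beta>, s)"
    by (simp add: beta_split_def)
  moreover have "A \<in> factors (pstar (pstar_list \<beta>) s)"
    using A last_split(2) by simp
  ultimately obtain Z Y where Z: "Z \<in> factors (pstar_list \<beta>)" and Y: "Y \<in> factors s" and AZY: "A = Z * Y"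
    and sel: "\<And>k. k < pat_cols (pstar_list \<beta>) \<Longrightarrow>
      \<exists>j. supp s k j \<and> (\<forall>i. supp (pstar_list \<beta>) i k \<longrightarrow> Z $$ (i,k) = A $$ (i,j))"
    using factorization_through_columns[OF last_split(1)] by blast
  have "Z \<in> Mset (beta_split \<beta> l)" if l: "l \<in> {1..length \<beta> - 1}" for l
  proof (rule Mset_split_of_selected_columns[OF ch _ _ _ Z sel])
    show "0 < l" "l < length \<beta>"
      using l by auto
    show "A \<in> Mset (beta_split (\<beta> @ [s]) l)"
      using A l by auto
  qed
  then show thesis
    using that Z Y AZY by blast
qed

lemma factors_inter_Mset_subset_Bset:
  "chainable_arch \<beta> \<Longrightarrow>
    factors (pstar_list \<beta>) \<inter> (\<Inter>l\<in>{1..length \<beta> - 1}. Mset (beta_split \<beta> l)) \<subseteq> Bset \<beta>"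
proof (induction \<beta> rule: rev_induct)
  case Nil
  then show ?case
    by (simp add: chainable_arch_def architecture_def)
next
  case (snoc s \<beta>)
  show ?case
  proof (cases "\<beta> = []")
    case True
    then show ?thesis
      by (simp add: Bset_single)
  next
    case False
    show ?thesis
    proof
      fix A assume "A \<in> factors (pstar_list (\<beta> @ [s])) \<inter>
        (\<Inter>l\<in>{1..length (\<beta> @ [s]) - 1}. Mset (beta_split (\<beta> @ [s]) l))"
      then obtain Z Y where "Z \<in> factors (pstar_list \<beta>) \<inter> (\<Inter>l\<in>{1..length \<beta> - 1}. Mset (beta_split \<beta> l))"
        "Y \<in> factors s" "A = Z * Y"
        using split_off_last_factor[OF snoc.prems False] by auto
      then show "A \<in> Bset (\<beta> @ [s])"
        using snoc.IH chainable_arch_appendD(1)[OF snoc.prems False] Bset_snoc[OF snoc.prems False]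
        by blast
    qed
  qed
qed

theorem corollary7p7:
  fixes \<beta> :: "pattern list"
  assumes "chainable_arch \<beta>" and "length \<beta> \<ge> 2"
  shows "Bset \<beta> = (\<Inter>l\<in>{1..length \<beta> - 1}. Bset [fst (beta_split \<beta> l), snd (beta_split \<beta> l)])
       \<and> (\<Inter>l\<in>{1..length \<beta> - 1}. Bset [fst (beta_split \<beta> l), snd (beta_split \<beta> l)])
           = factors (pstar_list \<beta>) \<inter> (\<Inter>l\<in>{1..length \<beta> - 1}. Mset (beta_split \<beta> l))"
proof -
  let ?I = "{1..length \<beta> - 1}"
  let ?B = "\<lambda>l. Bset [fst (beta_split \<beta> l), snd (beta_split \<beta> l)]"
  have "?I \<noteq> {}"
    using assms(2) by simp
  then have eq: "(\<Inter>l\<in>?I. ?B l) = factors (pstar_list \<beta>) \<inter> (\<Inter>l\<in>?I. Mset (beta_split \<beta> l))"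
    using Bset_beta_split[OF assms(1)] by auto
  have "Bset \<beta> \<subseteq> (\<Inter>l\<in>?I. ?B l)"
    using Bset_subset_Bset_beta_split[OF assms(1)] by blast
  moreover have "(\<Inter>l\<in>?I. ?B l) \<subseteq> Bset \<beta>"
    unfolding eq by (rule factors_inter_Mset_subset_Bset[OF assms(1)])
  ultimately have "Bset \<beta> = (\<Inter>l\<in>?I. ?B l)"
    by (rule equalityI)
  then show ?thesis
    using eq by (rule conjI)
qed

end
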